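(* Let $d\ge2$, let $\mathcal H\subset\mathbb S_1^{d-1}$ be an open hemisphere, and suppose $\mathcal D\subset\mathbb S_1^{d-1}$ has non-empty interior and closure contained in $\mathcal H$. Then there is a constant $c_{\mathcal D}>0$ such that for any $\epsilon>0$ there exist an open set $\mathcal U_\epsilon\subset\Gamma\backslash G$ and an integer $N_\epsilon$ such that $\mathcal G_{\mathcal D,N}(M)\ge c_{\mathcal D}\,\epsilon^{-1}$ for all $\Gamma M\in\mathcal U_\epsilon$ and all $N\ge N_\epsilon$.
   Context: $G=\mathrm{SL}(d+1,\mathbb R)$, $\Gamma=\mathrm{SL}(d+1,\mathbb Z)$. Row vectors in $\mathbb R^{d+1}$ are written $(u,\vec v)$; $\mathbb Z^{d+1}M=\{\vec mM:\vec m\in\mathbb Z^{d+1}\}$. $F_{\mathcal D}(M,t)=\min\{|\vec v|:(u,\vec v)\in\mathbb Z^{d+1}M,\ -t<u<1-t,\ \vec v\in\mathbb R_{>0}\mathcal D\}$ for $t\in(0,1)$. For $N\in\mathbb N$ put $N_+=N+\tfrac12$ and $\mathcal G_{\mathcal D,N}(M)=|\{F_{\mathcal D}(M,\tfrac{n}{N_+}):1\le n\le N\}|$. *)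

theory Defs
  imports "HOL-Analysis.Analysis"
begin

text \<open>R^d is modelled by real^'d (CARD('d) = d); R^(d+1) by
 real^('d option), the coordinate None being the first coordinate u and
 Some i the coordinates of the vector v. Row vectors act on matrices from
 the left (x v* M).\<close>

definition SLR :: "(real^'n^'n) set" where
  "SLR = {M. det M = 1}"

definition SLZ :: "(real^'n^'n) set" where
  "SLZ = {M. det M = 1 \<and> (\<forall>i j. M $ i $ j \<in> \<int>)}"

definition lattice_of :: "real^'n^'n \<Rightarrow> (real^'n) set" where
  "lattice_of M = {m v* M | m. \<forall>i. m $ i \<in> \<int>}"

definition u_part :: "real^('d::finite option) \<Rightarrow> real" where
  "u_part w = w $ None"

definition v_part :: "real^('d::finite option) \<Rightarrow> real^'d" where
  "v_part w = (\<chi> i. w $ Some i)"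

definition open_hemisphere :: "real^'d \<Rightarrow> (real^'d) set" where
  "open_hemisphere a = {x \<in> sphere 0 1. a \<bullet> x > 0}"

definition F_D :: "(real^'d::finite) set \<Rightarrow> real^('d::finite option)^('d option) \<Rightarrow> real \<Rightarrow> real" where
  "F_D D M t = Inf {norm (v_part w) | w. w \<in> lattice_of M \<and> - t < u_part w \<and> u_part w < 1 - t
                    \<and> (\<exists>r>0. \<exists>x\<in>D. v_part w = r *\<^sub>R x)}"

definition G_DN :: "(real^'d::finite) set \<Rightarrow> nat \<Rightarrow> real^('d::finite option)^('d option) \<Rightarrow> nat" where
  "G_DN D N M = card {F_D D M (real n / (real N + 1/2)) | n. 1 \<le> n \<and> n \<le> N}"

end

theory Submission
  imports Defs
begin

text \<open>
  Pick \<open>x0\<close> in the interior of \<open>D\<close> and a unit vector \<open>w\<close> orthogonal to \<open>a\<close> with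
  \<open>w \<bullet> x0 \<ge> 0\<close>, and put \<open>P = (1/2, x0)\<close>, \<open>E = (-1, \<rho> w)\<close>. The matrix \<open>M0\<close> has the rows
  \<open>P\<close>, \<open>\<zeta> E\<close> and an orthonormal basis of the complement of \<open>P, E\<close> stretched by \<open>\<Lambda> \<ge> 3\<close>,
  with \<open>\<zeta>\<close> and \<open>\<Lambda>\<close> balanced so that \<open>det M0 = 1\<close>. Its lattice vectors of length at most 2
  lie in the plane of \<open>P\<close> and \<open>E\<close>, and the only ones with \<open>\<bar>u\<bar> < 1\<close> and \<open>v\<close> in the cone
  over \<open>D\<close> are the candidates \<open>P + j \<zeta> E = (1/2 - j \<zeta>, x0 + j \<zeta> \<rho> w)\<close>. For \<open>t\<close> in a
  window of length \<open>\<zeta>/4\<close> at \<open>1/2 + (j - 1/2) \<zeta>\<close> the admissible vector with shortest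
  \<open>v\<close> is the \<open>j\<close>-th candidate, and \<open>norm (x0 + s w)\<close> grows strictly with \<open>s\<close> because
  \<open>w \<bullet> x0 \<ge> 0\<close>. Once \<open>N \<ge> 4/\<zeta>\<close> every window contains a sample \<open>n/(N + 1/2)\<close>, so
  \<open>F_D\<close> takes at least \<open>\<lfloor>1/(4\<zeta>)\<rfloor>\<close> values. All of this survives moving the rows of
  \<open>M0\<close> by less than some \<open>\<eta> > 0\<close>; as \<open>F_D\<close> only depends on the lattice, the
  \<open>SL(d+1, \<int>)\<close>-saturation of that neighbourhood is the open set \<open>U\<close>. Taking
  \<open>\<zeta> \<le> \<epsilon>/8\<close> gives the bound with \<open>c = 1\<close>.
\<close>

definition uv_vec :: "real \<Rightarrow> real^'d::finite \<Rightarrow> real^('d option)" where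
  "uv_vec u v = (\<chi> k. case k of None \<Rightarrow> u | Some i \<Rightarrow> v $ i)"

lemma u_part_uv_vec [simp]: "u_part (uv_vec u v) = u"
  by (simp add: uv_vec_def u_part_def)

lemma v_part_uv_vec [simp]: "v_part (uv_vec u v) = v"
  by (simp add: uv_vec_def v_part_def vec_eq_iff)

lemma u_part_add [simp]: "u_part (x + y) = u_part x + u_part y"
  and u_part_diff [simp]: "u_part (x - y) = u_part x - u_part y"
  and u_part_scaleR [simp]: "u_part (r *\<^sub>R x) = r * u_part x"
  and u_part_zero [simp]: "u_part 0 = 0"
  by (simp_all add: u_part_def)

lemma v_part_add [simp]: "v_part (x + y) = v_part x + v_part y"
  and v_part_diff [simp]: "v_part (x - y) = v_part x - v_part y"
  and v_part_scaleR [simp]: "v_part (r *\<^sub>R x) = r *\<^sub>R v_part x"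
  and v_part_zero [simp]: "v_part 0 = 0"
  by (simp_all add: v_part_def vec_eq_iff)

lemma uv_vec_nonzero: "u \<noteq> 0 \<Longrightarrow> uv_vec u v \<noteq> 0"
  by (metis u_part_uv_vec u_part_zero)

lemma uv_vec_not_in_span:
  assumes "x \<bullet> a \<noteq> 0" and "w \<bullet> a = 0"
  shows "uv_vec u x \<notin> span {uv_vec u' w}"
proof
  assume "uv_vec u x \<in> span {uv_vec u' w}"
  then obtain s where "uv_vec u x = s *\<^sub>R uv_vec u' w"
    by (auto simp: span_singleton)
  then have "x = s *\<^sub>R w"
    by (metis v_part_uv_vec v_part_scaleR)
  then show False
    using assms by simp
qed

lemma sum_UNIV_option:
  "(\<Sum>k\<in>(UNIV::'a::finite option set). f k) = f None + (\<Sum>i\<in>UNIV. f (Some i))"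
  by (simp add: UNIV_option_conv sum.reindex)

lemma inner_u_v_parts: "x \<bullet> y = u_part x * u_part y + v_part x \<bullet> v_part y"
  by (simp add: inner_vec_def sum_UNIV_option u_part_def v_part_def)

lemma norm_sq_u_v_parts: "(norm x)\<^sup>2 = (u_part x)\<^sup>2 + (norm (v_part x))\<^sup>2"
proof -
  have "(norm x)\<^sup>2 = x \<bullet> x" "(norm (v_part x))\<^sup>2 = v_part x \<bullet> v_part x"
    by (simp_all add: power2_norm_eq_inner)
  then show ?thesis
    using inner_u_v_parts[of x x] by (simp add: power2_eq_square)
qed

lemma abs_u_part_le: "\<bar>u_part x\<bar> \<le> norm x"
proof -
  have "(u_part x)\<^sup>2 \<le> (norm x)\<^sup>2"
    using norm_sq_u_v_parts[of x] by simp
  then have "\<bar>u_part x\<bar> \<le> \<bar>norm x\<bar>"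
    using abs_le_square_iff by blast
  then show ?thesis by simp
qed

lemma norm_v_part_le: "norm (v_part x) \<le> norm x"
proof -
  have "(norm (v_part x))\<^sup>2 \<le> (norm x)\<^sup>2"
    using norm_sq_u_v_parts[of x] by simp
  then show ?thesis
    using power2_le_imp_le by fastforce
qed

lemma norm_le_2_if_u_v_parts_small:
  assumes "\<bar>u_part x\<bar> \<le> 1" and "norm (v_part x) \<le> 6/5"
  shows "norm x \<le> 2"
proof (rule power2_le_imp_le)
  have "(u_part x)\<^sup>2 \<le> 1" "(norm (v_part x))\<^sup>2 \<le> (6/5)\<^sup>2"
    using assms by (simp_all add: abs_square_le_1 power_mono)
  then show "(norm x)\<^sup>2 \<le> 2\<^sup>2"
    using norm_sq_u_v_parts[of x] by (simp add: power2_eq_square)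
qed simp

lemma Ints_le_if_gt_minus_1:
  fixes x y :: real
  assumes "x \<in> \<int>" and "y \<in> \<int>" and "y - 1 < x"
  shows "y \<le> x"
proof (rule ccontr)
  assume "\<not> y \<le> x"
  then have "\<bar>x - y\<bar> < 1" "x - y \<noteq> 0"
    using assms(3) by auto
  then show False
    using Ints_nonzero_abs_less1[of "x - y"] assms(1,2) by simp
qed

lemma index_le_floor_quarter:
  assumes "0 < \<zeta>" and "j \<le> nat \<lfloor>1 / (4 * \<zeta>)\<rfloor>"
  shows "real j * \<zeta> \<le> 1/4"
proof -
  have "real j \<le> real (nat \<lfloor>1 / (4 * \<zeta>)\<rfloor>)"
    using assms(2) by simp
  also have "\<dots> = of_int \<lfloor>1 / (4 * \<zeta>)\<rfloor>"
    using assms(1) by simp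
  also have "\<dots> \<le> 1 / (4 * \<zeta>)"
    by (rule of_int_floor_le)
  finally show ?thesis
    using assms(1) by (simp add: field_simps)
qed

lemma reciprocal_le_floor_quarter:
  assumes "0 < \<zeta>" and "\<zeta> \<le> 1/8" and "\<zeta> \<le> \<epsilon> / 8"
  shows "1 / \<epsilon> \<le> real (nat \<lfloor>1 / (4 * \<zeta>)\<rfloor>)"
proof -
  define x where "x = 1 / (4 * \<zeta>)"
  have "2 \<le> x" "1 / \<epsilon> \<le> x / 2"
    using assms by (simp_all add: x_def field_simps)
  moreover have "x - 1 \<le> real (nat \<lfloor>x\<rfloor>)"
    using \<open>2 \<le> x\<close> real_of_int_floor_ge_diff_one[of x] by simp
  ultimately have "1 / \<epsilon> \<le> real (nat \<lfloor>x\<rfloor>)"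
    by linarith
  then show ?thesis
    by (simp add: x_def)
qed

lemma prod_option_scaling:
  fixes i1 i2 :: "'d::finite"
  assumes "i2 \<noteq> i1"
  shows "(\<Prod>k\<in>UNIV. case k of None \<Rightarrow> 1
            | Some i \<Rightarrow> if i = i1 then \<zeta> else if i = i2 then s * \<Lambda> else \<Lambda>)
         = \<zeta> * s * \<Lambda> ^ (CARD('d) - 1)" (is "prod ?c UNIV = _")
proof -
  have "prod ?c UNIV = (\<Prod>i\<in>UNIV. ?c (Some i))"
    by (simp add: UNIV_option_conv prod.reindex)
  also have "\<dots> = \<zeta> * (\<Prod>i\<in>UNIV - {i1}. ?c (Some i))"
    by (subst prod.remove[of UNIV i1]) simp_all
  also have "(\<Prod>i\<in>UNIV - {i1}. ?c (Some i)) = (\<Prod>i\<in>UNIV - {i1}. \<Lambda> * (if i = i2 then s else 1))"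
    by (rule prod.cong) (auto simp: mult.commute)
  also have "\<dots> = \<Lambda> ^ (CARD('d) - 1) * s"
    using assms by (simp add: prod.distrib card_Diff_singleton_if prod.If_cases Int_absorb1)
  finally show ?thesis
    by (simp add: mult_ac)
qed

lemma exists_large_power_scaling:
  fixes \<beta> \<zeta> :: real
  assumes "0 < \<beta>" and "0 < \<zeta>" and "1 \<le> n"
  obtains \<Lambda> where "3 \<le> \<Lambda>" and "1 / (\<Lambda> ^ n * \<beta>) \<le> \<zeta>"
proof
  define \<Lambda> where "\<Lambda> = max 3 (1 / (\<zeta> * \<beta>))"
  show "3 \<le> \<Lambda>"
    by (simp add: \<Lambda>_def)
  have "1 / (\<zeta> * \<beta>) \<le> \<Lambda> ^ n"
    using self_le_power[of \<Lambda> n] assms(3) by (simp add: \<Lambda>_def)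
  then show "1 / (\<Lambda> ^ n * \<beta>) \<le> \<zeta>"
    using assms(1,2) \<open>3 \<le> \<Lambda>\<close> by (simp add: field_simps)
qed

section \<open>Admissible lattice vectors\<close>

definition in_cone :: "(real^'d) set \<Rightarrow> real^'d \<Rightarrow> bool" where
  "in_cone D v \<longleftrightarrow> (\<exists>r>0. \<exists>x\<in>D. v = r *\<^sub>R x)"

definition admissible ::
  "(real^'d::finite) set \<Rightarrow> real^('d option)^('d option) \<Rightarrow> real \<Rightarrow> real^('d option) \<Rightarrow> bool"
where
  "admissible D M t Q \<longleftrightarrow>
     Q \<in> lattice_of M \<and> - t < u_part Q \<and> u_part Q < 1 - t \<and> in_cone D (v_part Q)"

lemma F_D_eq_minimum:
  assumes "admissible D M t Q"
    and "\<And>Q'. admissible D M t Q' \<Longrightarrow> norm (v_part Q) \<le> norm (v_part Q')"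
  shows "F_D D M t = norm (v_part Q)"
  unfolding F_D_def using assms
  by (intro cInf_eq_minimum) (auto simp: admissible_def in_cone_def)

section \<open>The lattice action of \<open>SL(n, \<int>)\<close>\<close>

lemma vector_matrix_mult_rows: "x v* A = (\<Sum>k\<in>UNIV. x $ k *\<^sub>R A $ k)"
  by (simp add: vector_matrix_mult_def vec_eq_iff sum_component mult.commute)

lemma norm_vector_matrix_mult_diff_le:
  assumes "\<And>k. norm (A $ k - B $ k) \<le> \<eta>"
  shows "norm (m v* A - m v* B) \<le> \<eta> * (\<Sum>k\<in>UNIV. \<bar>m $ k\<bar>)"
proof -
  have "norm (m v* A - m v* B) = norm (\<Sum>k\<in>UNIV. m $ k *\<^sub>R (A $ k - B $ k))"
    unfolding vector_matrix_mult_rows by (simp add: scaleR_diff_right sum_subtractf)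
  also have "\<dots> \<le> (\<Sum>k\<in>UNIV. \<bar>m $ k\<bar> * \<eta>)"
    using assms by (intro norm_sum[THEN order_trans] sum_mono) (simp add: mult_left_mono)
  finally show ?thesis
    by (simp add: sum_distrib_left mult.commute)
qed

lemma det_nonzero_if_left_kernel_trivial:
  fixes A :: "real^'n::finite^'n"
  assumes "\<And>x. x v* A = 0 \<Longrightarrow> x = 0"
  shows "det A \<noteq> 0"
proof -
  have "\<exists>B. B ** transpose A = mat 1"
    using assms by (simp add: matrix_left_invertible_ker)
  then have "invertible (transpose A)"
    by (simp add: invertible_left_inverse)
  then show ?thesis
    by (simp add: invertible_det_nz det_transpose)
qed

lemma det_integral:
  "(\<And>i j. A $ i $ j \<in> \<int>) \<Longrightarrow> det (A::real^'n::finite^'n) \<in> \<int>"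
  unfolding det_def by (intro Ints_sum Ints_mult Ints_prod) auto

lemma mat_1_SLZ: "mat 1 \<in> SLZ"
proof -
  have "\<forall>i j. (mat 1 :: real^'n::finite^'n) $ i $ j \<in> \<int>"
    by (simp add: mat_def)
  then show ?thesis
    by (simp add: SLZ_def)
qed

lemma SLZ_mult:
  assumes "A \<in> SLZ" and "B \<in> SLZ"
  shows "A ** B \<in> SLZ"
proof -
  have "\<forall>i j. (A ** B) $ i $ j \<in> \<int>"
    using assms by (auto simp: SLZ_def matrix_matrix_mult_def intro!: Ints_sum Ints_mult)
  moreover have "det (A ** B) = 1"
    using assms by (simp add: SLZ_def det_mul)
  ultimately show ?thesis
    by (simp add: SLZ_def)
qed

lemma SLZ_left_inverse:
  fixes A :: "real^'n::finite^'n"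
  assumes "A \<in> SLZ"
  shows "\<exists>B\<in>SLZ. B ** A = mat 1"
proof -
  have det_A: "det A = 1" and A_int: "\<And>i j. A $ i $ j \<in> \<int>"
    using assms by (auto simp: SLZ_def)
  obtain B :: "real^'n^'n" where AB: "A ** B = mat 1" and BA: "B ** A = mat 1"
    using invertible_det_nz[of A] det_A unfolding invertible_def by auto
  have "B $ k $ j \<in> \<int>" for k j :: 'n
  proof -
    define e where "e = (\<chi> i. (mat 1 :: real^'n^'n) $ i $ j)"
    have "A *v (\<chi> l. B $ l $ j) = e"
      using AB by (simp add: e_def matrix_vector_mult_def matrix_matrix_mult_def vec_eq_iff)
    then have "B $ k $ j = det (\<chi> i l. if l = k then e $ i else A $ i $ l)"
      using cramer[of A "\<chi> l. B $ l $ j" e] det_A by (simp add: vec_eq_iff)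
    also have "\<dots> \<in> \<int>"
      using A_int by (intro det_integral) (auto simp: e_def mat_def)
    finally show ?thesis .
  qed
  moreover have "det B = 1"
    using det_mul[of A B] AB det_A by simp
  ultimately show ?thesis
    using BA by (auto simp: SLZ_def)
qed

lemma lattice_of_SLZ_mult_subset:
  assumes "\<gamma> \<in> SLZ"
  shows "lattice_of (\<gamma> ** M) \<subseteq> lattice_of M"
proof
  fix x assume "x \<in> lattice_of (\<gamma> ** M)"
  then obtain m where m: "\<forall>i. m $ i \<in> \<int>" and x: "x = (m v* \<gamma>) v* M"
    by (auto simp: lattice_of_def vector_matrix_mul_assoc)
  have "\<forall>i. (m v* \<gamma>) $ i \<in> \<int>"
    using m assms by (auto simp: SLZ_def vector_matrix_mult_def intro!: Ints_sum Ints_mult)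
  with x show "x \<in> lattice_of M"
    by (auto simp: lattice_of_def)
qed

lemma lattice_of_SLZ_mult:
  assumes "\<gamma> \<in> SLZ"
  shows "lattice_of (\<gamma> ** M) = lattice_of M"
proof
  obtain \<beta> where \<beta>: "\<beta> \<in> SLZ" "\<beta> ** \<gamma> = mat 1"
    using SLZ_left_inverse[OF assms] by blast
  have "lattice_of M = lattice_of (\<beta> ** (\<gamma> ** M))"
    by (simp add: matrix_mul_assoc \<beta>(2))
  also have "\<dots> \<subseteq> lattice_of (\<gamma> ** M)"
    by (rule lattice_of_SLZ_mult_subset[OF \<beta>(1)])
  finally show "lattice_of M \<subseteq> lattice_of (\<gamma> ** M)" .
qed (rule lattice_of_SLZ_mult_subset[OF assms])

lemma G_DN_SLZ_mult: "\<gamma> \<in> SLZ \<Longrightarrow> G_DN D N (\<gamma> ** M) = G_DN D N M"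
  by (simp add: G_DN_def F_D_def lattice_of_SLZ_mult)

definition SLZ_saturation :: "(real^'n::finite^'n) set \<Rightarrow> (real^'n^'n) set" where
  "SLZ_saturation W = {M \<in> SLR. \<exists>\<gamma>\<in>SLZ. \<gamma> ** M \<in> W}"

lemma openin_SLZ_saturation:
  assumes "open W"
  shows "openin (top_of_set SLR) (SLZ_saturation W)"
proof -
  have "continuous_on UNIV (\<lambda>M::real^'n^'n. \<gamma> ** M)" for \<gamma> :: "real^'n::finite^'n"
    unfolding matrix_matrix_mult_def by (intro continuous_intros)
  then have "open (\<Union>\<gamma>\<in>SLZ. (\<lambda>M. \<gamma> ** M) -` W)"
    using assms by (intro open_UN ballI open_vimage) auto
  moreover have "SLZ_saturation W = SLR \<inter> (\<Union>\<gamma>\<in>SLZ. (\<lambda>M. \<gamma> ** M) -` W)"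
    by (auto simp: SLZ_saturation_def)
  ultimately show ?thesis
    by (auto simp: openin_open)
qed

lemma SLZ_saturation_mult:
  assumes "\<gamma> \<in> SLZ" and "M \<in> SLZ_saturation W"
  shows "\<gamma> ** M \<in> SLZ_saturation W"
proof -
  obtain \<beta> where \<beta>: "\<beta> \<in> SLZ" "\<beta> ** M \<in> W" and M: "M \<in> SLR"
    using assms(2) by (auto simp: SLZ_saturation_def)
  obtain \<gamma>' where \<gamma>': "\<gamma>' \<in> SLZ" "\<gamma>' ** \<gamma> = mat 1"
    using SLZ_left_inverse[OF assms(1)] by blast
  have "(\<beta> ** \<gamma>') ** (\<gamma> ** M) = \<beta> ** M"
    by (metis \<gamma>'(2) matrix_mul_assoc matrix_mul_lid)
  moreover have "\<gamma> ** M \<in> SLR"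
    using assms(1) M by (simp add: SLR_def SLZ_def det_mul)
  ultimately show ?thesis
    using \<beta> \<gamma>'(1) unfolding SLZ_saturation_def
    by (auto intro!: bexI[of _ "\<beta> ** \<gamma>'"] SLZ_mult)
qed

lemma SLZ_saturation_superset: "M \<in> SLR \<Longrightarrow> M \<in> W \<Longrightarrow> M \<in> SLZ_saturation W"
  by (auto simp: SLZ_saturation_def intro!: bexI[OF _ mat_1_SLZ])

lemma open_rows_neighbourhood:
  "open {M::real^'n::finite^'n. \<forall>k. norm (M $ k - M0 $ k) < \<eta>}"
proof -
  have "{M::real^'n^'n. \<forall>k. norm (M $ k - M0 $ k) < \<eta>} = (\<Inter>k. {M. norm (M $ k - M0 $ k) < \<eta>})"
    by auto
  then show ?thesis
    by (simp add: open_Collect_less continuous_intros)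
qed

lemma norm_sgn_diff_le:
  fixes v x :: "'a::real_normed_vector"
  assumes "norm x = 1"
  shows "norm (sgn v - x) \<le> 2 * norm (v - x)"
proof (cases "v = 0")
  case True
  then show ?thesis using assms by simp
next
  case False
  have "sgn v - v = (1 - norm v) *\<^sub>R sgn v"
    using False by (simp add: sgn_div_norm algebra_simps)
  then have "norm (sgn v - v) = \<bar>norm x - norm v\<bar>"
    using False assms by (simp add: norm_sgn)
  also have "\<dots> \<le> norm (v - x)"
    using norm_triangle_ineq3[of x v] by (simp add: norm_minus_commute)
  finally show ?thesis
    using norm_triangle_ineq[of "sgn v - v" "v - x"] by simp
qed

lemma compact_open_hemisphere_margin:
  assumes "compact K" and "K \<subseteq> open_hemisphere a"
  shows "\<exists>\<mu>>0. \<forall>x\<in>K. \<mu> \<le> x \<bullet> a"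
proof (cases "K = {}")
  case False
  have "continuous_on K (\<lambda>y. a \<bullet> y)"
    by (intro continuous_intros)
  then obtain x where x: "x \<in> K" "\<And>y. y \<in> K \<Longrightarrow> a \<bullet> x \<le> a \<bullet> y"
    using continuous_attains_inf[OF assms(1) False] by blast
  then show ?thesis
    using assms(2) by (intro exI[of _ "a \<bullet> x"]) (auto simp: open_hemisphere_def inner_commute)
qed (use zero_less_one in blast)

lemma exists_unit_orthogonal:
  fixes a x :: "real^'d::finite"
  assumes "2 \<le> CARD('d)"
  shows "\<exists>w. norm w = 1 \<and> w \<bullet> a = 0 \<and> 0 \<le> w \<bullet> x"
proof -
  define W where "W = {y. \<forall>z\<in>span {a}. orthogonal z y}"
  have "dim W + dim {a} = CARD('d)"
    using dim_subspace_orthogonal_to_vectors[of "span {a}" UNIV]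
    by (simp add: W_def subspace_span)
  moreover have "dim {a} \<le> 1"
    using dim_le_card[of "{a}" "{a}"] by simp
  ultimately have "1 \<le> dim W"
    using assms by linarith
  have "subspace W"
    unfolding W_def by (rule subspace_orthogonal_to_vectors)
  then obtain B where B: "B \<subseteq> W" "\<And>x. x \<in> B \<Longrightarrow> norm x = 1" "card B = dim W"
    using orthonormal_basis_subspace by metis
  have "B \<noteq> {}"
    using B(3) \<open>1 \<le> dim W\<close> by (metis card.empty not_one_le_zero)
  then obtain w where w: "w \<in> B"
    by blast
  then have "norm w = 1" "w \<bullet> a = 0"
    using B by (auto simp: W_def span_base orthogonal_def inner_commute)
  then show ?thesis
  proof (cases "0 \<le> w \<bullet> x")
    case False
    then show ?thesis
      using \<open>norm w = 1\<close> \<open>w \<bullet> a = 0\<close> by (intro exI[of _ "- w"]) simp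
  qed blast
qed

lemma orthonormal_family_orthogonal_to_pair:
  fixes P E :: "real^('d::finite option)" and k :: 'd
  assumes "P \<notin> span {E}" and "E \<noteq> 0"
  obtains \<phi> where "\<And>i. i \<noteq> k \<Longrightarrow> \<phi> i \<bullet> P = 0" "\<And>i. i \<noteq> k \<Longrightarrow> \<phi> i \<bullet> E = 0"
    "\<And>i j. i \<noteq> k \<Longrightarrow> j \<noteq> k \<Longrightarrow> \<phi> i \<bullet> \<phi> j = (if i = j then 1 else 0)"
proof -
  define S where "S = {y. \<forall>x\<in>span {P, E}. orthogonal x y}"
  have "card (range (Some :: 'd \<Rightarrow> 'd option)) = CARD('d)"
    by (simp add: card_image)
  then have "CARD('d option) = CARD('d) + 1"
    by (simp add: UNIV_option_conv)
  moreover have "dim S + dim {P, E} = CARD('d option)"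
    using dim_subspace_orthogonal_to_vectors[of "span {P, E}" UNIV]
    by (simp add: S_def subspace_span)
  moreover have "dim {P, E} = 2"
    using assms by (simp add: dim_insert)
  ultimately have dim_S: "dim S = card (UNIV - {k})"
    by (simp add: card_Diff_singleton_if)
  have "subspace S"
    unfolding S_def by (rule subspace_orthogonal_to_vectors)
  then obtain B where B: "B \<subseteq> S" "pairwise orthogonal B" "\<And>x. x \<in> B \<Longrightarrow> norm x = 1"
    "independent B" "card B = dim S"
    using orthonormal_basis_subspace by metis
  obtain \<phi> where \<phi>: "bij_betw \<phi> (UNIV - {k}) B"
    using finite_same_card_bij[of "UNIV - {k}" B] independent_imp_finite[OF B(4)] B(5) dim_S
    by auto
  then have \<phi>_B: "\<phi> i \<in> B" if "i \<noteq> k" for i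
    using that by (auto simp: bij_betw_def)
  show ?thesis
  proof
    fix i assume "i \<noteq> k"
    then have "\<phi> i \<in> S"
      using \<phi>_B B(1) by auto
    then show "\<phi> i \<bullet> P = 0" "\<phi> i \<bullet> E = 0"
      by (auto simp: S_def span_base orthogonal_def inner_commute)
  next
    fix i j assume ij: "i \<noteq> k" "j \<noteq> k"
    show "\<phi> i \<bullet> \<phi> j = (if i = j then 1 else 0)"
    proof (cases "i = j")
      case True
      then show ?thesis
        using B(3) \<phi>_B[OF ij(1)] by (simp add: power2_norm_eq_inner[symmetric])
    next
      case False
      then have "\<phi> i \<noteq> \<phi> j"
        using \<phi> ij by (auto simp: bij_betw_def inj_on_def)
      then show ?thesis
        using False B(2) \<phi>_B ij by (auto simp: pairwise_def orthogonal_def)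
    qed
  qed
qed

section \<open>A frame adapted to \<open>D\<close>\<close>

locale lattice_frame =
  fixes D :: "(real^'d::finite) set" and a x0 w :: "real^'d" and \<mu> \<rho> :: real
    and i1 :: 'd and \<phi> :: "'d \<Rightarrow> real^('d option)"
  assumes margin: "\<And>x. x \<in> D \<Longrightarrow> \<mu> \<le> x \<bullet> a"
    and D_sphere: "D \<subseteq> sphere 0 1"
    and norm_a: "norm a = 1"
    and \<mu>_pos: "0 < \<mu>"
    and norm_x0: "norm x0 = 1"
    and \<rho>_pos: "0 < \<rho>" and \<rho>_le: "\<rho> \<le> 1/2"
    and ball_in_D: "\<And>y. norm y = 1 \<Longrightarrow> dist y x0 < 2 * \<rho> \<Longrightarrow> y \<in> D"
    and norm_w: "norm w = 1" and w_orth_a: "w \<bullet> a = 0" and w_x0_nonneg: "0 \<le> w \<bullet> x0"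
    and \<phi>_orth_base: "\<And>i. i \<noteq> i1 \<Longrightarrow> \<phi> i \<bullet> uv_vec (1/2) x0 = 0"
    and \<phi>_orth_step: "\<And>i. i \<noteq> i1 \<Longrightarrow> \<phi> i \<bullet> uv_vec (-1) (\<rho> *\<^sub>R w) = 0"
    and \<phi>_orthonormal:
      "\<And>i j. i \<noteq> i1 \<Longrightarrow> j \<noteq> i1 \<Longrightarrow> \<phi> i \<bullet> \<phi> j = (if i = j then 1 else 0)"
begin

lemma x0_in_D: "x0 \<in> D"
  using ball_in_D[of x0] norm_x0 \<rho>_pos by simp

lemma \<mu>_le_x0: "\<mu> \<le> x0 \<bullet> a"
  using margin[OF x0_in_D] .

lemma \<mu>_le_1: "\<mu> \<le> 1"
  using \<mu>_le_x0 norm_cauchy_schwarz[of x0 a] norm_x0 norm_a by simp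

lemma in_cone_margin:
  assumes "in_cone D v"
  shows "\<mu> * norm v \<le> v \<bullet> a" and "v \<noteq> 0"
proof -
  obtain r x where r: "0 < r" "x \<in> D" "v = r *\<^sub>R x"
    using assms by (auto simp: in_cone_def)
  have "norm x = 1"
    using D_sphere r(2) by auto
  then show "v \<noteq> 0"
    using r by auto
  have "\<mu> * r \<le> (x \<bullet> a) * r"
    using margin[OF r(2)] r(1) by (simp add: mult_right_mono)
  then show "\<mu> * norm v \<le> v \<bullet> a"
    using r \<open>norm x = 1\<close> by (simp add: mult.commute)
qed

lemma in_cone_if_near_x0:
  assumes "norm (v - x0) < \<rho>"
  shows "in_cone D v"
proof -
  have "v \<noteq> 0"
    using assms norm_x0 \<rho>_le by auto
  have "dist (sgn v) x0 < 2 * \<rho>"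
    using norm_sgn_diff_le[OF norm_x0, of v] assms by (simp add: dist_norm)
  then have "sgn v \<in> D"
    using ball_in_D \<open>v \<noteq> 0\<close> by (simp add: norm_sgn)
  moreover have "v = norm v *\<^sub>R sgn v"
    using \<open>v \<noteq> 0\<close> by (simp add: sgn_div_norm)
  ultimately show ?thesis
    unfolding in_cone_def using \<open>v \<noteq> 0\<close> by (metis zero_less_norm_iff)
qed

text \<open>\<open>base_vec\<close> and \<open>step_vec\<close> are the vectors \<open>P\<close> and \<open>E\<close> of the introduction.\<close>

definition "base_vec = uv_vec (1/2) x0"
definition "step_vec = uv_vec (-1) (\<rho> *\<^sub>R w)"

definition "frame_row k =
  (case k of None \<Rightarrow> base_vec | Some i \<Rightarrow> if i = i1 then step_vec else \<phi> i)"

definition "frame_comb \<alpha> = (\<Sum>k\<in>UNIV. \<alpha> k *\<^sub>R frame_row k)"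
definition "plane_part \<alpha> = \<alpha> None *\<^sub>R base_vec + \<alpha> (Some i1) *\<^sub>R step_vec"
definition "transverse_part \<alpha> = (\<Sum>i\<in>UNIV - {i1}. \<alpha> (Some i) *\<^sub>R \<phi> i)"

lemma frame_comb_split: "frame_comb \<alpha> = plane_part \<alpha> + transverse_part \<alpha>"
proof -
  have "frame_comb \<alpha> = \<alpha> None *\<^sub>R base_vec + (\<Sum>i\<in>UNIV. \<alpha> (Some i) *\<^sub>R frame_row (Some i))"
    by (simp add: frame_comb_def sum_UNIV_option frame_row_def)
  also have "(\<Sum>i\<in>UNIV. \<alpha> (Some i) *\<^sub>R frame_row (Some i))
      = \<alpha> (Some i1) *\<^sub>R step_vec + (\<Sum>i\<in>UNIV - {i1}. \<alpha> (Some i) *\<^sub>R frame_row (Some i))"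
    by (subst sum.remove[of UNIV i1]) (auto simp: frame_row_def)
  also have "(\<Sum>i\<in>UNIV - {i1}. \<alpha> (Some i) *\<^sub>R frame_row (Some i)) = transverse_part \<alpha>"
    unfolding transverse_part_def by (rule sum.cong) (auto simp: frame_row_def)
  finally show ?thesis
    by (simp add: plane_part_def algebra_simps)
qed

lemma plane_part_eq:
  "plane_part \<alpha> =
     uv_vec (\<alpha> None / 2 - \<alpha> (Some i1)) (\<alpha> None *\<^sub>R x0 + (\<alpha> (Some i1) * \<rho>) *\<^sub>R w)"
  by (simp add: plane_part_def base_vec_def step_vec_def uv_vec_def vec_eq_iff
      split: option.splits)

lemma plane_part_inner_\<phi>:
  assumes "i \<noteq> i1"
  shows "plane_part \<alpha> \<bullet> \<phi> i = 0"
proof -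
  have "base_vec \<bullet> \<phi> i = 0" "step_vec \<bullet> \<phi> i = 0"
    using \<phi>_orth_base[OF assms] \<phi>_orth_step[OF assms]
    by (simp_all add: base_vec_def step_vec_def inner_commute)
  then show ?thesis
    by (simp add: plane_part_def inner_add_left)
qed

lemma transverse_part_inner_\<phi>:
  assumes "i \<noteq> i1"
  shows "transverse_part \<alpha> \<bullet> \<phi> i = \<alpha> (Some i)"
proof -
  have "transverse_part \<alpha> \<bullet> \<phi> i = (\<Sum>j\<in>UNIV - {i1}. \<alpha> (Some j) * (\<phi> j \<bullet> \<phi> i))"
    by (simp add: transverse_part_def inner_sum_left)
  also have "\<dots> = (\<Sum>j\<in>UNIV - {i1}. if j = i then \<alpha> (Some i) else 0)"
    using assms by (intro sum.cong) (auto simp: \<phi>_orthonormal)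
  also have "\<dots> = \<alpha> (Some i)"
    using assms by simp
  finally show ?thesis .
qed

lemma frame_comb_inner_\<phi>: "i \<noteq> i1 \<Longrightarrow> frame_comb \<alpha> \<bullet> \<phi> i = \<alpha> (Some i)"
  by (simp add: frame_comb_split inner_add_left plane_part_inner_\<phi> transverse_part_inner_\<phi>)

lemma abs_coeff_le_norm_frame_comb: "i \<noteq> i1 \<Longrightarrow> \<bar>\<alpha> (Some i)\<bar> \<le> norm (frame_comb \<alpha>)"
  using Cauchy_Schwarz_ineq2[of "frame_comb \<alpha>" "\<phi> i"] frame_comb_inner_\<phi>[of i \<alpha>]
    \<phi>_orthonormal[of i i]
  by (simp add: norm_eq_sqrt_inner)

lemma norm_plane_part_le: "norm (plane_part \<alpha>) \<le> norm (frame_comb \<alpha>)"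
proof -
  have "plane_part \<alpha> \<bullet> transverse_part \<alpha> = 0"
    by (simp add: transverse_part_def inner_sum_right plane_part_inner_\<phi>)
  then have "(norm (frame_comb \<alpha>))\<^sup>2 = (norm (plane_part \<alpha>))\<^sup>2 + (norm (transverse_part \<alpha>))\<^sup>2"
    using norm_add_Pythagorean[of "plane_part \<alpha>" "transverse_part \<alpha>"]
    by (simp add: frame_comb_split orthogonal_def)
  then have "(norm (plane_part \<alpha>))\<^sup>2 \<le> (norm (frame_comb \<alpha>))\<^sup>2"
    by simp
  then show ?thesis
    by (rule power2_le_imp_le) simp
qed

lemma frame_comb_eq_0_coeff_eq_0:
  assumes "frame_comb \<alpha> = 0"
  shows "\<alpha> k = 0"
proof -
  have transverse: "\<alpha> (Some i) = 0" if "i \<noteq> i1" for i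
    using frame_comb_inner_\<phi>[OF that, of \<alpha>] assms by simp
  then have "transverse_part \<alpha> = 0"
    by (simp add: transverse_part_def)
  then have "plane_part \<alpha> = 0"
    using assms by (simp add: frame_comb_split)
  then have "u_part (plane_part \<alpha>) = 0" "v_part (plane_part \<alpha>) = 0"
    by simp_all
  then have u: "\<alpha> None / 2 - \<alpha> (Some i1) = 0"
    and v: "\<alpha> None *\<^sub>R x0 + (\<alpha> (Some i1) * \<rho>) *\<^sub>R w = 0"
    by (simp_all add: plane_part_eq)
  have "\<alpha> None * (x0 \<bullet> a) = 0"
    using arg_cong[OF v, of "\<lambda>y. y \<bullet> a"] by (simp add: inner_add_left w_orth_a)
  then have "\<alpha> None = 0"
    using \<mu>_le_x0 \<mu>_pos by auto
  show ?thesis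
  proof (cases k)
    case (Some i)
    then show ?thesis
      using u transverse \<open>\<alpha> None = 0\<close> by (cases "i = i1") auto
  qed (use \<open>\<alpha> None = 0\<close> in simp)
qed

lemma det_frame_rows_nonzero: "det (\<chi> k. frame_row k) \<noteq> 0"
proof (rule det_nonzero_if_left_kernel_trivial)
  fix x assume "x v* (\<chi> k. frame_row k) = 0"
  then have "frame_comb (\<lambda>k. x $ k) = 0"
    by (simp add: vector_matrix_mult_rows frame_comb_def)
  then show "x = 0"
    using frame_comb_eq_0_coeff_eq_0 by (simp add: vec_eq_iff)
qed

definition "frame_matrix c = (\<chi> k. c k *\<^sub>R frame_row k)"

lemma vector_mult_frame_matrix: "m v* frame_matrix c = frame_comb (\<lambda>k. m $ k * c k)"
  by (simp add: vector_matrix_mult_rows frame_matrix_def frame_comb_def)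

lemma det_frame_matrix: "det (frame_matrix c) = prod c UNIV * det (\<chi> k. frame_row k)"
  using det_rows_mul[of c frame_row] by (simp add: frame_matrix_def scalar_mult_eq_scaleR)

definition "ray_norm s = norm (x0 + s *\<^sub>R w)"

lemma ray_norm_sq: "(ray_norm s)\<^sup>2 = 1 + 2 * s * (w \<bullet> x0) + s\<^sup>2"
proof -
  have "(ray_norm s)\<^sup>2 = (x0 + s *\<^sub>R w) \<bullet> (x0 + s *\<^sub>R w)"
    by (simp add: ray_norm_def power2_norm_eq_inner)
  also have "\<dots> = x0 \<bullet> x0 + 2 * s * (w \<bullet> x0) + s\<^sup>2 * (w \<bullet> w)"
    by (simp add: inner_add_left inner_add_right inner_commute power2_eq_square algebra_simps)
  finally show ?thesis
    using norm_x0 norm_w by (simp add: power2_norm_eq_inner[symmetric])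
qed

lemma ray_norm_mono:
  assumes "0 \<le> s'" and "s' \<le> s"
  shows "ray_norm s' \<le> ray_norm s"
proof -
  have "s' * (w \<bullet> x0) \<le> s * (w \<bullet> x0)"
    using assms w_x0_nonneg by (simp add: mult_right_mono)
  moreover have "s'\<^sup>2 \<le> s\<^sup>2"
    using assms by (simp add: power_mono)
  ultimately have "(ray_norm s')\<^sup>2 \<le> (ray_norm s)\<^sup>2"
    by (simp add: ray_norm_sq)
  then show ?thesis
    by (rule power2_le_imp_le) (simp add: ray_norm_def)
qed

lemma ray_norm_le: "0 \<le> s \<Longrightarrow> ray_norm s \<le> 1 + s"
  using norm_triangle_ineq[of x0 "s *\<^sub>R w"] norm_x0 norm_w by (simp add: ray_norm_def)

lemma ray_norm_gap:
  assumes "0 \<le> s'" and "s' \<le> s" and "s \<le> 1/2"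
  shows "(s\<^sup>2 - s'\<^sup>2) / 3 \<le> ray_norm s - ray_norm s'"
proof -
  have "s' * (w \<bullet> x0) \<le> s * (w \<bullet> x0)"
    using assms w_x0_nonneg by (simp add: mult_right_mono)
  then have "s\<^sup>2 - s'\<^sup>2 \<le> (ray_norm s)\<^sup>2 - (ray_norm s')\<^sup>2"
    using ray_norm_sq[of s] ray_norm_sq[of s'] by linarith
  also have "\<dots> = (ray_norm s - ray_norm s') * (ray_norm s + ray_norm s')"
    by (simp add: power2_eq_square algebra_simps)
  also have "\<dots> \<le> (ray_norm s - ray_norm s') * 3"
    using ray_norm_le[of s] ray_norm_le[of s'] ray_norm_mono[OF assms(1,2)] assms
    by (intro mult_left_mono) auto
  finally show ?thesis
    by simp
qed

end

lemma lattice_frame_exists: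
  fixes D :: "(real^'d::finite) set"
  assumes "2 \<le> CARD('d)" and "norm a = 1" and "D \<subseteq> sphere 0 1"
    and "openin (top_of_set (sphere 0 1)) V" and "x0 \<in> V" and "V \<subseteq> D"
    and "closure D \<subseteq> open_hemisphere a"
  obtains w \<mu> \<rho> i1 \<phi> where "lattice_frame D a x0 w \<mu> \<rho> i1 \<phi>"
proof -
  have "compact (closure D)"
    using bounded_subset[OF bounded_sphere assms(3)] by (simp add: compact_closure)
  then obtain \<mu> where \<mu>: "0 < \<mu>" "\<And>x. x \<in> D \<Longrightarrow> \<mu> \<le> x \<bullet> a"
    using compact_open_hemisphere_margin[OF _ assms(7)] closure_subset by blast
  obtain r where r: "0 < r" "\<And>y. y \<in> sphere 0 1 \<Longrightarrow> dist y x0 < r \<Longrightarrow> y \<in> V"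
    using assms(4,5) unfolding openin_euclidean_subtopology_iff by blast
  define \<rho> where "\<rho> = min r 1 / 2"
  have x0: "norm x0 = 1" "\<mu> \<le> x0 \<bullet> a"
    using assms(3,5,6) \<mu>(2) by auto
  obtain w where w: "norm w = 1" "w \<bullet> a = 0" "0 \<le> w \<bullet> x0"
    using exists_unit_orthogonal[OF assms(1)] by blast
  fix i1 :: 'd
  have "uv_vec (1/2) x0 \<notin> span {uv_vec (-1) (\<rho> *\<^sub>R w)}"
    using uv_vec_not_in_span[of x0 a "\<rho> *\<^sub>R w"] x0(2) w(2) \<mu>(1) by simp
  moreover have "uv_vec (-1) (\<rho> *\<^sub>R w) \<noteq> 0"
    by (simp add: uv_vec_nonzero)
  ultimately obtain \<phi> where "\<And>i. i \<noteq> i1 \<Longrightarrow> \<phi> i \<bullet> uv_vec (1/2) x0 = 0"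
    "\<And>i. i \<noteq> i1 \<Longrightarrow> \<phi> i \<bullet> uv_vec (-1) (\<rho> *\<^sub>R w) = 0"
    "\<And>i j. i \<noteq> i1 \<Longrightarrow> j \<noteq> i1 \<Longrightarrow> \<phi> i \<bullet> \<phi> j = (if i = j then 1 else 0)"
    by (rule orthonormal_family_orthogonal_to_pair[where k = i1]) blast
  moreover have "y \<in> D" if "norm y = 1" "dist y x0 < 2 * \<rho>" for y
    using r(2)[of y] that assms(6) by (auto simp: \<rho>_def)
  ultimately have "lattice_frame D a x0 w \<mu> \<rho> i1 \<phi>"
    using assms(2,3) \<mu> x0 w r(1) by unfold_locales (auto simp: \<rho>_def)
  then show ?thesis
    by (rule that)
qed

section \<open>The unperturbed matrix \<open>M0\<close>\<close>

locale scaled_frame = lattice_frame D a x0 w \<mu> \<rho> i1 \<phi>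
  for D :: "(real^'d::finite) set" and a x0 w :: "real^'d" and \<mu> \<rho> :: real
    and i1 :: 'd and \<phi> :: "'d \<Rightarrow> real^('d option)" +
  fixes \<zeta> \<Lambda> :: real and c :: "'d option \<Rightarrow> real"
  assumes c_None: "c None = 1" and c_i1: "c (Some i1) = \<zeta>"
    and abs_c_transverse: "\<And>i. i \<noteq> i1 \<Longrightarrow> \<bar>c (Some i)\<bar> = \<Lambda>"
    and \<zeta>_pos: "0 < \<zeta>" and \<zeta>_le: "\<zeta> \<le> 1/8" and \<Lambda>_ge: "3 \<le> \<Lambda>"
begin

definition "M0 = frame_matrix c"

definition "plane_coeffs z y = (\<chi> k. if k = None then z else if k = Some i1 then y else 0)"

text \<open>\<open>plane_vec z y = z P + y \<zeta> E\<close>.\<close>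

definition "plane_vec z y = uv_vec (z / 2 - y * \<zeta>) (z *\<^sub>R x0 + (y * \<zeta> * \<rho>) *\<^sub>R w)"

text \<open>Moving the rows of \<open>M0\<close> by at most \<open>\<eta>\<close> moves each short lattice vector by at most
  \<open>\<delta>\<close>, which is small against the gaps \<open>\<mu>\<close>, \<open>\<zeta> \<rho>\<close> and \<open>(\<zeta> \<rho>)\<^sup>2\<close> of the unperturbed lattice.\<close>

definition "\<delta> = \<mu> * (\<zeta> * \<rho>)\<^sup>2 / 8"
definition "coeff_const = 3 / (\<mu> * \<zeta>) + real CARD('d)"
definition "\<eta> = \<delta> / (4 * coeff_const)"

definition "window j = {1/2 + real j * \<zeta> - \<zeta> / 2 .. 1/2 + real j * \<zeta> - \<zeta> / 4}"

lemma \<zeta>\<rho>_le: "\<zeta> * \<rho> \<le> 1/16"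
  using mult_mono[OF \<zeta>_le \<rho>_le] \<zeta>_pos \<rho>_pos by simp

lemma \<delta>_pos: "0 < \<delta>"
  using \<mu>_pos \<zeta>_pos \<rho>_pos by (simp add: \<delta>_def)

lemma \<delta>_le: "\<delta> \<le> \<mu> * (\<zeta> * \<rho>) / 128"
proof -
  have "\<delta> = \<mu> * (\<zeta> * \<rho>) * (\<zeta> * \<rho>) / 8"
    by (simp add: \<delta>_def power2_eq_square)
  also have "\<dots> \<le> \<mu> * (\<zeta> * \<rho>) * (1/16) / 8"
    using \<zeta>\<rho>_le \<mu>_pos \<zeta>_pos \<rho>_pos by (intro divide_right_mono mult_left_mono) auto
  finally show ?thesis
    by simp
qed

lemma \<delta>_small: "\<delta> \<le> 1/2048" "\<delta> < \<mu>" "\<delta> \<le> \<zeta> / 256" "\<delta> \<le> \<rho> / 256"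
  "2 * \<delta> < \<mu> * (\<zeta> * \<rho>)"
proof -
  have "\<mu> * (\<zeta> * \<rho>) \<le> \<zeta> * \<rho>" "\<mu> * (\<zeta> * \<rho>) > 0"
    using \<mu>_le_1 \<mu>_pos \<zeta>_pos \<rho>_pos by (simp_all add: mult_left_le_one_le)
  moreover have "\<zeta> * \<rho> \<le> \<zeta> / 2" "\<zeta> * \<rho> \<le> \<rho> / 8"
    using mult_left_mono[OF \<rho>_le, of \<zeta>] mult_right_mono[OF \<zeta>_le, of \<rho>] \<zeta>_pos \<rho>_pos
    by simp_all
  moreover have "\<mu> * (\<zeta> * \<rho>) \<le> \<mu> / 16"
    using \<zeta>\<rho>_le \<mu>_pos by (simp add: mult_left_le)
  ultimately show "\<delta> \<le> 1/2048" "\<delta> < \<mu>" "\<delta> \<le> \<zeta> / 256" "\<delta> \<le> \<rho> / 256"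
    "2 * \<delta> < \<mu> * (\<zeta> * \<rho>)"
    using \<delta>_le \<zeta>\<rho>_le \<mu>_pos by linarith+
qed

lemma \<delta>_gap: "2 * \<delta> < (\<zeta> * \<rho>)\<^sup>2 / 3"
proof -
  have "0 < (\<zeta> * \<rho>)\<^sup>2"
    using \<zeta>_pos \<rho>_pos by simp
  moreover have "\<mu> * (\<zeta> * \<rho>)\<^sup>2 \<le> (\<zeta> * \<rho>)\<^sup>2"
    using \<mu>_pos \<mu>_le_1 by (intro mult_left_le_one_le) auto
  ultimately show ?thesis
    by (simp add: \<delta>_def)
qed

lemma coeff_const_pos: "0 < coeff_const"
  using \<mu>_pos \<zeta>_pos by (simp add: coeff_const_def add_pos_nonneg)

lemma \<eta>_pos: "0 < \<eta>"
  using \<delta>_pos coeff_const_pos by (simp add: \<eta>_def)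

lemma vector_mult_M0: "m v* M0 = frame_comb (\<lambda>k. m $ k * c k)"
  by (simp add: M0_def vector_mult_frame_matrix)

lemma plane_part_scaled: "plane_part (\<lambda>k. m $ k * c k) = plane_vec (m $ None) (m $ Some i1)"
  by (simp add: plane_part_eq plane_vec_def c_None c_i1 mult_ac)

lemma plane_coeffs_mult_M0: "plane_coeffs z y v* M0 = plane_vec z y"
proof -
  have "transverse_part (\<lambda>k. plane_coeffs z y $ k * c k) = 0"
    by (simp add: transverse_part_def plane_coeffs_def)
  then show ?thesis
    using plane_part_scaled[of "plane_coeffs z y"]
    by (simp add: vector_mult_M0 frame_comb_split plane_coeffs_def)
qed

lemma u_part_plane_vec [simp]: "u_part (plane_vec z y) = z / 2 - y * \<zeta>"
  and v_part_plane_vec [simp]: "v_part (plane_vec z y) = z *\<^sub>R x0 + (y * \<zeta> * \<rho>) *\<^sub>R w"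
  by (simp_all add: plane_vec_def)

lemma v_part_plane_vec_inner_a: "v_part (plane_vec z y) \<bullet> a = z * (x0 \<bullet> a)"
  by (simp add: inner_add_left w_orth_a)

lemma transverse_coeff_bound: "i \<noteq> i1 \<Longrightarrow> \<bar>m $ Some i\<bar> * \<Lambda> \<le> norm (m v* M0)"
  using abs_coeff_le_norm_frame_comb[of i "\<lambda>k. m $ k * c k"] abs_c_transverse[of i]
  by (simp add: vector_mult_M0 abs_mult)

lemma plane_coeff_bounds:
  shows "\<bar>m $ None\<bar> * \<mu> \<le> norm (m v* M0)"
    and "\<bar>m $ Some i1\<bar> * \<zeta> * \<mu> \<le> 2 * norm (m v* M0)"
proof -
  define I where "I = plane_vec (m $ None) (m $ Some i1)"
  have I_le: "norm I \<le> norm (m v* M0)"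
    using norm_plane_part_le[of "\<lambda>k. m $ k * c k"] by (simp add: I_def plane_part_scaled vector_mult_M0)
  have "\<bar>m $ None\<bar> * \<mu> \<le> \<bar>m $ None\<bar> * (x0 \<bullet> a)"
    using \<mu>_le_x0 by (simp add: mult_left_mono)
  also have "\<dots> = \<bar>v_part I \<bullet> a\<bar>"
    using \<mu>_le_x0 \<mu>_pos by (simp add: I_def inner_add_left w_orth_a abs_mult)
  also have "\<dots> \<le> norm I"
    using Cauchy_Schwarz_ineq2[of "v_part I" a] norm_a norm_v_part_le[of I] by simp
  finally show None_bound: "\<bar>m $ None\<bar> * \<mu> \<le> norm (m v* M0)"
    using I_le by linarith
  have "\<bar>m $ Some i1\<bar> * \<zeta> \<le> \<bar>u_part I\<bar> + \<bar>m $ None\<bar> / 2"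
    using \<zeta>_pos by (simp add: I_def abs_mult)
  also have "\<dots> \<le> norm (m v* M0) + \<bar>m $ None\<bar> / 2"
    using abs_u_part_le[of I] I_le by simp
  finally have "\<bar>m $ Some i1\<bar> * \<zeta> * \<mu> \<le> (norm (m v* M0) + \<bar>m $ None\<bar> / 2) * \<mu>"
    using \<mu>_pos by (intro mult_right_mono) auto
  also have "\<dots> = norm (m v* M0) * \<mu> + \<bar>m $ None\<bar> * \<mu> / 2"
    by (simp add: algebra_simps)
  also have "\<dots> \<le> norm (m v* M0) + \<bar>m $ None\<bar> * \<mu> / 2"
    using \<mu>_le_1 by (simp add: mult_left_le)
  finally show "\<bar>m $ Some i1\<bar> * \<zeta> * \<mu> \<le> 2 * norm (m v* M0)"
    using None_bound norm_ge_zero[of "m v* M0"] by linarith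
qed

lemma coeff_sum_bound: "(\<Sum>k\<in>UNIV. \<bar>m $ k\<bar>) \<le> coeff_const * norm (m v* M0)"
proof -
  define N where "N = norm (m v* M0)"
  have "\<bar>m $ Some i\<bar> \<le> N" if "i \<in> UNIV - {i1}" for i
  proof -
    have "\<bar>m $ Some i\<bar> \<le> \<bar>m $ Some i\<bar> * \<Lambda>"
      using \<Lambda>_ge by (simp add: mult_le_cancel_left1)
    then show ?thesis
      using transverse_coeff_bound[of i m] that by (simp add: N_def)
  qed
  then have "(\<Sum>i\<in>UNIV - {i1}. \<bar>m $ Some i\<bar>) \<le> real (card (UNIV - {i1})) * N"
    using sum_mono[of "UNIV - {i1}" "\<lambda>i. \<bar>m $ Some i\<bar>" "\<lambda>_. N"] by simp
  also have "\<dots> \<le> real CARD('d) * N"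
    by (simp add: N_def card_Diff_singleton_if mult_right_mono)
  finally have transverse: "(\<Sum>i\<in>UNIV - {i1}. \<bar>m $ Some i\<bar>) \<le> real CARD('d) * N" .
  have "\<mu> * \<zeta> \<le> \<mu>"
    using \<zeta>_le \<mu>_pos by (simp add: mult_left_le)
  then have "\<bar>m $ None\<bar> * (\<mu> * \<zeta>) \<le> N"
    using plane_coeff_bounds(1)[of m] mult_left_mono[of "\<mu> * \<zeta>" \<mu> "\<bar>m $ None\<bar>"]
    by (simp add: N_def)
  then have None: "\<bar>m $ None\<bar> \<le> N / (\<mu> * \<zeta>)"
    using \<mu>_pos \<zeta>_pos by (simp add: pos_le_divide_eq)
  have i1: "\<bar>m $ Some i1\<bar> \<le> 2 * N / (\<mu> * \<zeta>)"
    using plane_coeff_bounds(2)[of m] \<mu>_pos \<zeta>_pos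
    by (simp add: N_def pos_le_divide_eq mult_ac)
  have "(\<Sum>k\<in>UNIV. \<bar>m $ k\<bar>) = \<bar>m $ None\<bar> + \<bar>m $ Some i1\<bar> + (\<Sum>i\<in>UNIV - {i1}. \<bar>m $ Some i\<bar>)"
    by (simp add: sum_UNIV_option sum.remove[of UNIV i1])
  also have "\<dots> \<le> 3 * N / (\<mu> * \<zeta>) + real CARD('d) * N"
    using None i1 transverse by (simp add: add_divide_distrib)
  also have "\<dots> = coeff_const * N"
    by (simp add: coeff_const_def algebra_simps)
  finally show ?thesis
    by (simp add: N_def)
qed

lemma ray_norm_step:
  assumes "0 \<le> s" and "s + 1 \<le> s'" and "(s + 1) * \<zeta> \<le> 1/2"
  shows "ray_norm (s * \<zeta> * \<rho>) + (\<zeta> * \<rho>)\<^sup>2 / 3 \<le> ray_norm (s' * \<zeta> * \<rho>)"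
proof -
  define r r' where "r = s * \<zeta> * \<rho>" and "r' = (s + 1) * \<zeta> * \<rho>"
  have r: "0 \<le> r" "r \<le> r'"
    using assms(1) \<zeta>_pos \<rho>_pos by (simp_all add: r_def r'_def mult_right_mono)
  have "r' \<le> 1/2 * \<rho>"
    unfolding r'_def using assms(3) \<rho>_pos by (intro mult_right_mono) auto
  then have "r' \<le> 1/2"
    using \<rho>_le by linarith
  have "r'\<^sup>2 - r\<^sup>2 = (\<zeta> * \<rho>)\<^sup>2 * (2 * s + 1)"
    by (simp add: r_def r'_def power2_eq_square algebra_simps)
  also have "\<dots> \<ge> (\<zeta> * \<rho>)\<^sup>2"
    using assms(1) by (simp add: mult_le_cancel_left1)
  finally have "(\<zeta> * \<rho>)\<^sup>2 / 3 \<le> (r'\<^sup>2 - r\<^sup>2) / 3"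
    by (rule divide_right_mono) simp
  then have "(\<zeta> * \<rho>)\<^sup>2 / 3 \<le> ray_norm r' - ray_norm r"
    using ray_norm_gap[OF r \<open>r' \<le> 1/2\<close>] by linarith
  moreover have "ray_norm r' \<le> ray_norm (s' * \<zeta> * \<rho>)"
    using assms r \<zeta>_pos \<rho>_pos by (intro ray_norm_mono) (auto simp: r'_def mult_right_mono)
  ultimately show ?thesis
    by (simp add: r_def)
qed

lemma near_plane_vec_parts:
  assumes "norm (Q - plane_vec z y) \<le> e"
  shows "\<bar>u_part Q - (z / 2 - y * \<zeta>)\<bar> \<le> e"
    and "norm (v_part Q - v_part (plane_vec z y)) \<le> e"
    and "\<bar>v_part Q \<bullet> a - z * (x0 \<bullet> a)\<bar> \<le> e"
proof -
  show "\<bar>u_part Q - (z / 2 - y * \<zeta>)\<bar> \<le> e"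
    using abs_u_part_le[of "Q - plane_vec z y"] assms by simp
  show v: "norm (v_part Q - v_part (plane_vec z y)) \<le> e"
    using norm_v_part_le[of "Q - plane_vec z y"] assms by simp
  have "\<bar>(v_part Q - v_part (plane_vec z y)) \<bullet> a\<bar> \<le> norm (v_part Q - v_part (plane_vec z y))"
    using Cauchy_Schwarz_ineq2[of "v_part Q - v_part (plane_vec z y)" a] norm_a by simp
  then show "\<bar>v_part Q \<bullet> a - z * (x0 \<bullet> a)\<bar> \<le> e"
    using v v_part_plane_vec_inner_a[of z y] by (simp add: inner_diff_left)
qed

lemma near_plane_vec_negative_not_in_cone:
  assumes "z \<le> -1" and "norm (Q - plane_vec z y) \<le> \<delta>"
  shows "\<not> in_cone D (v_part Q)"
proof
  assume "in_cone D (v_part Q)"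
  then have "0 \<le> v_part Q \<bullet> a"
    using in_cone_margin(1) \<mu>_pos by (smt (verit) mult_nonneg_nonneg norm_ge_zero)
  moreover have "z * (x0 \<bullet> a) \<le> - \<mu>"
    using mult_right_mono[OF assms(1), of "x0 \<bullet> a"] \<mu>_le_x0 \<mu>_pos by simp
  ultimately show False
    using near_plane_vec_parts(3)[OF assms(2)] \<delta>_small(2) by linarith
qed

lemma near_plane_vec_vertical_not_in_cone:
  assumes "1 \<le> \<bar>y\<bar>" and "norm (Q - plane_vec 0 y) \<le> \<delta>"
  shows "\<not> in_cone D (v_part Q)"
proof
  assume cone: "in_cone D (v_part Q)"
  have "\<zeta> * \<rho> \<le> \<bar>y\<bar> * (\<zeta> * \<rho>)"
    using mult_right_mono[OF assms(1), of "\<zeta> * \<rho>"] \<zeta>_pos \<rho>_pos by simp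
  also have "\<dots> = norm (v_part (plane_vec 0 y))"
    using norm_w \<zeta>_pos \<rho>_pos by (simp add: abs_mult)
  finally have "\<zeta> * \<rho> - \<delta> \<le> norm (v_part Q)"
    using near_plane_vec_parts(2)[OF assms(2)] norm_triangle_ineq3[of "v_part Q" "v_part (plane_vec 0 y)"]
    by (simp add: norm_minus_commute)
  then have "\<mu> * (\<zeta> * \<rho> - \<delta>) \<le> \<mu> * norm (v_part Q)"
    using \<mu>_pos by (intro mult_left_mono) auto
  also have "\<dots> \<le> \<delta>"
    using in_cone_margin(1)[OF cone] near_plane_vec_parts(3)[OF assms(2)] by simp
  finally have "\<mu> * (\<zeta> * \<rho>) \<le> \<delta> + \<mu> * \<delta>"
    by (simp add: algebra_simps)
  moreover have "\<mu> * \<delta> \<le> \<delta>"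
    using \<mu>_le_1 \<delta>_pos by (simp add: mult_left_le_one_le)
  ultimately show False
    using \<delta>_small(5) by linarith
qed

lemma near_plane_vec_long:
  assumes "2 \<le> z" and "y \<in> \<int>" and "u_part Q < 1" and "norm (Q - plane_vec z y) \<le> \<delta>"
  shows "2 - \<delta> \<le> norm (v_part Q)"
proof -
  have "z / 2 - y * \<zeta> < 1 + \<delta>"
    using near_plane_vec_parts(1)[OF assms(4)] assms(3) by linarith
  then have "(-1) * \<zeta> < y * \<zeta>"
    using assms(1) \<delta>_small(3) \<zeta>_pos by linarith
  then have "-1 < y"
    using mult_right_less_imp_less \<zeta>_pos by fastforce
  then have "0 \<le> y"
    using Ints_le_if_gt_minus_1[OF assms(2), of 0] by simp
  have "0 \<le> y * \<zeta> * \<rho> * (w \<bullet> x0)"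
    using \<open>0 \<le> y\<close> \<zeta>_pos \<rho>_pos w_x0_nonneg by (intro mult_nonneg_nonneg) auto
  then have "2 \<le> v_part (plane_vec z y) \<bullet> x0"
    using assms(1) norm_x0 by (simp add: inner_add_left power2_norm_eq_inner[symmetric])
  also have "\<dots> \<le> norm (v_part (plane_vec z y))"
    using norm_cauchy_schwarz[of "v_part (plane_vec z y)" x0] norm_x0 by simp
  finally show ?thesis
    using near_plane_vec_parts(2)[OF assms(4)] norm_triangle_ineq3[of "v_part Q" "v_part (plane_vec z y)"]
    by (simp add: norm_minus_commute)
qed

lemma near_plane_vec_index_ge:
  assumes "y \<in> \<int>" and "norm (Q - plane_vec 1 y) \<le> \<delta>"
    and "u_part Q < 1 - t" and "t \<in> window j"
  shows "real j \<le> y"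
proof -
  have "(real j - 1/2 - y) * \<zeta> = real j * \<zeta> - \<zeta> / 2 - y * \<zeta>"
    by (simp add: algebra_simps)
  then have "(real j - 1/2 - y) * \<zeta> < 1/2 * \<zeta>"
    using near_plane_vec_parts(1)[OF assms(2)] assms(3,4) \<delta>_small(3) \<zeta>_pos
    by (simp add: window_def) linarith
  then have "real j - 1/2 - y < 1/2"
    using mult_right_less_imp_less \<zeta>_pos by fastforce
  then show ?thesis
    using Ints_le_if_gt_minus_1[OF assms(1)] by simp
qed

lemma window_bounds:
  assumes "1 \<le> j" and "real j * \<zeta> \<le> 1/4" and "t \<in> window j"
  shows "1/2 \<le> t" and "t \<le> 3/4"
proof -
  have "\<zeta> \<le> real j * \<zeta>"
    using mult_right_mono[of 1 "real j" \<zeta>] assms(1) \<zeta>_pos by simp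
  moreover have "1/2 + real j * \<zeta> - \<zeta> / 2 \<le> t" "t \<le> 1/2 + real j * \<zeta> - \<zeta> / 4"
    using assms(3) by (simp_all add: window_def)
  ultimately show "1/2 \<le> t" "t \<le> 3/4"
    using assms(2) \<zeta>_pos by linarith+
qed

lemma norm_v_part_near_plane_vec:
  assumes "norm (Q - plane_vec 1 s) \<le> \<delta>"
  shows "\<bar>norm (v_part Q) - ray_norm (s * \<zeta> * \<rho>)\<bar> \<le> \<delta>"
  using near_plane_vec_parts(2)[OF assms] norm_triangle_ineq3[of "v_part Q" "v_part (plane_vec 1 s)"]
  by (simp add: ray_norm_def)

lemma ray_norm_candidate_le:
  assumes "0 \<le> s" and "s * \<zeta> \<le> 1/4"
  shows "ray_norm (s * \<zeta> * \<rho>) \<le> 9/8"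
proof -
  have "s * \<zeta> * \<rho> \<le> 1/4 * (1/2)"
    using mult_mono[OF assms(2) \<rho>_le] \<rho>_pos by simp
  then show ?thesis
    using ray_norm_le[of "s * \<zeta> * \<rho>"] assms(1) \<zeta>_pos \<rho>_pos by simp
qed

lemma near_plane_vec_in_cone_base_coeff_eq_1:
  assumes "z \<in> \<int>" and "y \<in> \<int>" and "z \<noteq> 0 \<or> y \<noteq> 0"
    and "norm (Q - plane_vec z y) \<le> \<delta>" and "u_part Q < 1"
    and "in_cone D (v_part Q)" and "norm (v_part Q) \<le> 6/5"
  shows "z = 1"
proof -
  obtain k where k: "z = of_int k"
    using assms(1) Ints_cases by blast
  consider "k \<le> -1" | "k = 0" | "k = 1" | "2 \<le> k"
    by linarith
  then show ?thesis
  proof cases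
    case 1
    then show ?thesis
      using near_plane_vec_negative_not_in_cone[OF _ assms(4)] assms(6) k by simp
  next
    case 2
    then show ?thesis
      using near_plane_vec_vertical_not_in_cone[of y Q] assms Ints_nonzero_abs_ge1[OF assms(2)] k
      by simp
  next
    case 4
    then have "2 - \<delta> \<le> norm (v_part Q)"
      using near_plane_vec_long[OF _ assms(2,5,4)] k by simp
    then show ?thesis
      using assms(7) \<delta>_small(1) by linarith
  qed (use k in simp)
qed

lemma window_sample:
  assumes "1 \<le> j" and "real j * \<zeta> \<le> 1/4" and "4 / \<zeta> \<le> real N + 1/2"
  obtains n where "1 \<le> n" "n \<le> N" "real n / (real N + 1/2) \<in> window j"
proof -
  define K where "K = real N + 1/2"
  define T where "T = 1/2 + real j * \<zeta> - \<zeta> / 2"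
  define n where "n = nat \<lceil>T * K\<rceil>"
  have "32 \<le> 4 / \<zeta>"
    using \<zeta>_pos \<zeta>_le by (simp add: field_simps)
  then have K_ge: "32 \<le> K"
    using assms(3) unfolding K_def by linarith
  have "4 \<le> \<zeta> * K"
    using assms(3) \<zeta>_pos by (simp add: K_def field_simps)
  then have K: "0 < K" "32 \<le> K" "1 / K \<le> \<zeta> / 4"
    using K_ge by (simp_all add: field_simps)
  have "\<zeta> \<le> real j * \<zeta>"
    using mult_right_mono[of 1 "real j" \<zeta>] assms(1) \<zeta>_pos by simp
  then have T: "0 < T" "T \<le> 3/4"
    unfolding T_def using assms(2) \<zeta>_pos by linarith+
  have n: "real n = of_int \<lceil>T * K\<rceil>"
    using T K by (simp add: n_def)
  have "T \<le> real n / K"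
    using n K by (simp add: field_simps)
  moreover have "real n / K \<le> T + \<zeta> / 4"
  proof -
    have "real n < T * K + 1"
      using n by linarith
    then have "real n / K < T + 1 / K"
      using K by (simp add: field_simps)
    then show ?thesis
      using K by linarith
  qed
  moreover have "1 \<le> n"
  proof -
    have "0 < T * K"
      using T K by simp
    then show ?thesis
      using n le_of_int_ceiling[of "T * K"] by linarith
  qed
  moreover have "n \<le> N"
  proof -
    have "T * K \<le> 3/4 * K"
      using T K by (intro mult_right_mono) auto
    then have "real n < real N + 1"
      using n K by (simp add: K_def) linarith
    then show ?thesis
      by simp
  qed
  ultimately show ?thesis
    using that by (simp add: window_def T_def K_def)
qed

end

section \<open>Perturbations of \<open>M0\<close>\<close>

locale near_frame = scaled_frame D a x0 w \<mu> \<rho> i1 \<phi> \<zeta> \<Lambda> c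
  for D :: "(real^'d::finite) set" and a x0 w :: "real^'d" and \<mu> \<rho> :: real
    and i1 :: 'd and \<phi> :: "'d \<Rightarrow> real^('d option)" and \<zeta> \<Lambda> :: real
    and c :: "'d option \<Rightarrow> real" +
  fixes M :: "real^('d option)^('d option)"
  assumes rows_close: "\<And>k. norm (M $ k - M0 $ k) \<le> \<eta>"
begin

lemma perturbation_relative: "norm (m v* M - m v* M0) \<le> \<delta> / 4 * norm (m v* M0)"
proof -
  have "norm (m v* M - m v* M0) \<le> \<eta> * (\<Sum>k\<in>UNIV. \<bar>m $ k\<bar>)"
    by (rule norm_vector_matrix_mult_diff_le[OF rows_close])
  also have "\<dots> \<le> \<eta> * (coeff_const * norm (m v* M0))"
    using coeff_sum_bound[of m] \<eta>_pos by (intro mult_left_mono) auto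
  also have "\<dots> = \<delta> / 4 * norm (m v* M0)"
    using coeff_const_pos by (simp add: \<eta>_def)
  finally show ?thesis .
qed

lemma perturbation_if_short_in_M0:
  assumes "norm (m v* M0) \<le> 2"
  shows "norm (m v* M - m v* M0) \<le> \<delta>"
  using perturbation_relative[of m] mult_left_mono[OF assms, of "\<delta> / 4"] \<delta>_pos by linarith

lemma perturbation_if_short_in_M:
  assumes "norm (m v* M) \<le> 2"
  shows "norm (m v* M - m v* M0) \<le> \<delta>"
proof -
  define e where "e = norm (m v* M - m v* M0)"
  have "norm (m v* M0) \<le> 2 + e"
    using norm_triangle_ineq4[of "m v* M" "m v* M - m v* M0"] assms
    by (simp add: e_def norm_minus_commute)
  have "e \<le> \<delta> / 4 * norm (m v* M0)"
    using perturbation_relative[of m] by (simp add: e_def)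
  also have "\<dots> \<le> \<delta> / 4 * (2 + e)"
    using \<open>norm (m v* M0) \<le> 2 + e\<close> \<delta>_pos by (intro mult_left_mono) auto
  finally have "e \<le> \<delta> / 2 + \<delta> * e / 4"
    by (simp add: algebra_simps)
  moreover have "\<delta> * e \<le> e"
    using \<delta>_small(1) \<delta>_pos by (intro mult_left_le_one_le) (auto simp: e_def)
  ultimately have "e \<le> \<delta>"
    using \<delta>_pos by linarith
  then show ?thesis
    by (simp add: e_def)
qed

lemma short_vector_in_plane:
  assumes "\<forall>k. m $ k \<in> \<int>" and "norm (m v* M) \<le> 2"
  shows "m = plane_coeffs (m $ None) (m $ Some i1)"
proof -
  have "m $ Some i = 0" if "i \<noteq> i1" for i
  proof (rule Ints_nonzero_abs_less1)
    have "\<bar>m $ Some i\<bar> * \<Lambda> \<le> 2 + \<delta>"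
      using transverse_coeff_bound[OF that, of m] perturbation_if_short_in_M[OF assms(2)] assms(2)
        norm_triangle_ineq4[of "m v* M" "m v* M - m v* M0"]
      by (simp add: norm_minus_commute)
    then have "\<bar>m $ Some i\<bar> * \<Lambda> < 1 * \<Lambda>"
      using \<Lambda>_ge \<delta>_small(1) by linarith
    then show "\<bar>m $ Some i\<bar> < 1"
      using \<Lambda>_ge by (simp add: mult_less_cancel_right)
  qed (use assms(1) in blast)
  then show ?thesis
    by (auto simp: plane_coeffs_def vec_eq_iff split: option.splits)
qed

lemma short_admissible_vector_is_candidate:
  assumes "Q \<in> lattice_of M" and "\<bar>u_part Q\<bar> < 1" and "in_cone D (v_part Q)"
    and "norm (v_part Q) \<le> 6/5"
  obtains y where "y \<in> \<int>" "Q = plane_coeffs 1 y v* M" "norm (Q - plane_vec 1 y) \<le> \<delta>"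
proof -
  obtain m where m: "\<forall>k. m $ k \<in> \<int>" and Q: "Q = m v* M"
    using assms(1) by (auto simp: lattice_of_def)
  have short: "norm (m v* M) \<le> 2"
    using norm_le_2_if_u_v_parts_small[of Q] assms(2,4) Q by simp
  define z y where "z = m $ None" and "y = m $ Some i1"
  have "z \<in> \<int>" "y \<in> \<int>"
    using m by (simp_all add: z_def y_def)
  have m_eq: "m = plane_coeffs z y"
    using short_vector_in_plane[OF m short] by (simp add: z_def y_def)
  have close: "norm (Q - plane_vec z y) \<le> \<delta>"
    using perturbation_if_short_in_M[OF short] by (simp add: Q m_eq plane_coeffs_mult_M0)
  have "z = 1"
  proof (cases "z = 0 \<and> y = 0")
    case True
    then have "m = 0"
      using m_eq by (simp add: plane_coeffs_def vec_eq_iff)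
    then have "Q = 0"
      by (simp add: Q vector_matrix_mult_rows)
    then show ?thesis
      using in_cone_margin(2)[OF assms(3)] by simp
  next
    case False
    then show ?thesis
      using near_plane_vec_in_cone_base_coeff_eq_1[OF \<open>z \<in> \<int>\<close> \<open>y \<in> \<int>\<close> _ close] assms(2-4)
      by simp
  qed
  then show ?thesis
    using that \<open>y \<in> \<int>\<close> close Q m_eq by blast
qed

definition "candidate_length s = norm (v_part (plane_coeffs 1 s v* M))"

lemma candidate_near_plane_vec:
  assumes "0 \<le> s" and "s * \<zeta> \<le> 1/4"
  shows "norm (plane_coeffs 1 s v* M - plane_vec 1 s) \<le> \<delta>"
proof -
  have "ray_norm (s * \<zeta> * \<rho>) \<le> 6/5"
    using ray_norm_candidate_le[OF assms] by simp
  moreover have "\<bar>u_part (plane_vec 1 s)\<bar> \<le> 1"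
    using assms mult_nonneg_nonneg[OF assms(1) less_imp_le[OF \<zeta>_pos]] by simp
  ultimately have "norm (plane_vec 1 s) \<le> 2"
    by (intro norm_le_2_if_u_v_parts_small) (simp_all add: ray_norm_def)
  then show ?thesis
    using perturbation_if_short_in_M0[of "plane_coeffs 1 s"] by (simp add: plane_coeffs_mult_M0)
qed

lemma candidate_length_near_ray_norm:
  "0 \<le> s \<Longrightarrow> s * \<zeta> \<le> 1/4 \<Longrightarrow> \<bar>candidate_length s - ray_norm (s * \<zeta> * \<rho>)\<bar> \<le> \<delta>"
  using norm_v_part_near_plane_vec[OF candidate_near_plane_vec] by (simp add: candidate_length_def)

lemma candidate_length_strict_mono:
  assumes "0 \<le> s" and "s + 1 \<le> s'" and "s' * \<zeta> \<le> 1/4"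
  shows "candidate_length s < candidate_length s'"
proof -
  have "s * \<zeta> \<le> s' * \<zeta>" "(s + 1) * \<zeta> \<le> s' * \<zeta>"
    using assms(2) \<zeta>_pos by (simp_all add: mult_right_mono)
  then have "ray_norm (s * \<zeta> * \<rho>) + (\<zeta> * \<rho>)\<^sup>2 / 3 \<le> ray_norm (s' * \<zeta> * \<rho>)"
    using ray_norm_step[OF assms(1,2)] assms(3) by simp
  moreover have "s * \<zeta> \<le> 1/4"
    using \<open>s * \<zeta> \<le> s' * \<zeta>\<close> assms(3) by linarith
  ultimately show ?thesis
    using candidate_length_near_ray_norm[of s] candidate_length_near_ray_norm[of s'] assms \<delta>_gap by simp
qed

lemma candidate_admissible:
  assumes "1 \<le> j" and "real j * \<zeta> \<le> 1/4" and "t \<in> window j"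
  shows "admissible D M t (plane_coeffs 1 (real j) v* M)"
proof -
  let ?Q = "plane_coeffs 1 (real j) v* M"
  have close: "norm (?Q - plane_vec 1 (real j)) \<le> \<delta>"
    using candidate_near_plane_vec assms(2) by simp
  have "?Q \<in> lattice_of M"
    unfolding lattice_of_def by (auto simp: plane_coeffs_def)
  moreover have "- t < u_part ?Q" "u_part ?Q < 1 - t"
    using near_plane_vec_parts(1)[OF close] assms(3) \<delta>_small(1,3) \<zeta>_le \<zeta>_pos
    by (auto simp: window_def abs_le_iff)
  moreover have "in_cone D (v_part ?Q)"
  proof (rule in_cone_if_near_x0)
    have "real j * \<zeta> * \<rho> \<le> 1/4 * \<rho>"
      using assms(2) \<rho>_pos by (intro mult_right_mono) auto
    then have "norm ((real j * \<zeta> * \<rho>) *\<^sub>R w) \<le> \<rho> / 4"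
      using norm_w \<zeta>_pos \<rho>_pos by simp
    then show "norm (v_part ?Q - x0) < \<rho>"
      using near_plane_vec_parts(2)[OF close] \<delta>_small(4) \<rho>_pos
        norm_triangle_ineq[of "v_part ?Q - v_part (plane_vec 1 (real j))" "(real j * \<zeta> * \<rho>) *\<^sub>R w"]
      by simp
  qed
  ultimately show ?thesis
    by (simp add: admissible_def)
qed

lemma candidate_minimal:
  assumes "1 \<le> j" and "real j * \<zeta> \<le> 1/4" and "t \<in> window j" and "admissible D M t Q"
  shows "candidate_length (real j) \<le> norm (v_part Q)"
proof (rule ccontr)
  assume "\<not> ?thesis"
  then have shorter: "norm (v_part Q) < candidate_length (real j)"
    by simp
  have near_j: "\<bar>candidate_length (real j) - ray_norm (real j * \<zeta> * \<rho>)\<bar> \<le> \<delta>"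
    using candidate_length_near_ray_norm assms(2) by simp
  have "norm (v_part Q) \<le> 6/5"
    using shorter near_j ray_norm_candidate_le[OF _ assms(2)] \<delta>_small(1) by simp
  moreover have "\<bar>u_part Q\<bar> < 1"
    using assms(4) window_bounds[OF assms(1-3)] by (auto simp: admissible_def)
  ultimately obtain y where y: "y \<in> \<int>" "Q = plane_coeffs 1 y v* M" "norm (Q - plane_vec 1 y) \<le> \<delta>"
    using short_admissible_vector_is_candidate assms(4) by (auto simp: admissible_def)
  have "real j \<le> y"
    using near_plane_vec_index_ge[OF y(1,3) _ assms(3)] assms(4) by (simp add: admissible_def)
  show False
  proof (cases "y = real j")
    case True
    then show False
      using shorter y(2) by (simp add: candidate_length_def)
  next
    case False
    then have "real j + 1 \<le> y"
      using Ints_le_if_gt_minus_1[OF y(1), of "real j + 1"] \<open>real j \<le> y\<close> by simp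
    moreover have "(real j + 1) * \<zeta> \<le> 1/2"
      using assms(2) \<zeta>_le by (simp add: algebra_simps)
    ultimately have "ray_norm (real j * \<zeta> * \<rho>) + (\<zeta> * \<rho>)\<^sup>2 / 3 \<le> ray_norm (y * \<zeta> * \<rho>)"
      using ray_norm_step by simp
    then show False
      using norm_v_part_near_plane_vec[OF y(3)] near_j shorter \<delta>_gap by linarith
  qed
qed

lemma F_D_on_window:
  assumes "1 \<le> j" and "real j * \<zeta> \<le> 1/4" and "t \<in> window j"
  shows "F_D D M t = candidate_length (real j)"
  unfolding candidate_length_def
  by (rule F_D_eq_minimum[OF candidate_admissible[OF assms]])
    (use candidate_minimal[OF assms] in \<open>simp add: candidate_length_def\<close>)

lemma G_DN_lower_bound:
  assumes "4 / \<zeta> \<le> real N + 1/2"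
  shows "nat \<lfloor>1 / (4 * \<zeta>)\<rfloor> \<le> G_DN D N M"
proof -
  define J where "J = nat \<lfloor>1 / (4 * \<zeta>)\<rfloor>"
  define S where "S = {F_D D M (real n / (real N + 1/2)) | n. 1 \<le> n \<and> n \<le> N}"
  have J: "real j * \<zeta> \<le> 1/4" if "j \<in> {1..J}" for j
    using index_le_floor_quarter[OF \<zeta>_pos] that by (simp add: J_def)
  have "(\<lambda>j. candidate_length (real j)) ` {1..J} \<subseteq> S"
  proof clarify
    fix j assume j: "j \<in> {1..J}"
    obtain n where n: "1 \<le> n" "n \<le> N" "real n / (real N + 1/2) \<in> window j"
      using window_sample[OF _ J[OF j] assms] j by auto
    then have "candidate_length (real j) = F_D D M (real n / (real N + 1/2))"
      using F_D_on_window[OF _ J[OF j]] j by simp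
    then show "candidate_length (real j) \<in> S"
      using n unfolding S_def by blast
  qed
  moreover have "finite S"
  proof -
    have "S = (\<lambda>n. F_D D M (real n / (real N + 1/2))) ` {1..N}"
      by (auto simp: S_def)
    then show ?thesis
      by simp
  qed
  moreover have inj: "inj_on (\<lambda>j. candidate_length (real j)) {1..J}"
  proof (rule linorder_inj_onI')
    fix i j assume "i \<in> {1..J}" "j \<in> {1..J}" "i < j"
    then show "candidate_length (real i) \<noteq> candidate_length (real j)"
      using candidate_length_strict_mono[of "real i" "real j"] J[of j] by simp
  qed
  ultimately have "card ((\<lambda>j. candidate_length (real j)) ` {1..J}) \<le> card S"
    by (intro card_mono)
  then have "J \<le> card S"
    using card_image[OF inj] by simp
  then show ?thesis
    by (simp add: J_def S_def G_DN_def)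
qed

end

section \<open>Choice of the scaling\<close>

lemma (in lattice_frame) scaled_frame_exists:
  assumes "2 \<le> CARD('d)" and "0 < \<zeta>0"
  obtains \<zeta> \<Lambda> c where "scaled_frame D a x0 w \<mu> \<rho> i1 \<phi> \<zeta> \<Lambda> c" and "\<zeta> \<le> \<zeta>0"
    and "det (frame_matrix c) = 1"
proof -
  define \<beta> where "\<beta> = det (\<chi> k. frame_row k)"
  have \<beta>: "0 < \<bar>\<beta>\<bar>"
    using det_frame_rows_nonzero by (simp add: \<beta>_def)
  obtain i2 where "i2 \<noteq> i1"
    using assms(1) by (metis card_le_Suc0_iff_eq finite numeral_2_eq_2 not_less_eq_eq)
  have "0 < min (1/8) \<zeta>0" "1 \<le> CARD('d) - 1"
    using assms by simp_all
  then obtain \<Lambda> where \<Lambda>: "3 \<le> \<Lambda>" "1 / (\<Lambda> ^ (CARD('d) - 1) * \<bar>\<beta>\<bar>) \<le> min (1/8) \<zeta>0"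
    using exists_large_power_scaling[OF \<beta>] by blast
  define \<zeta> where "\<zeta> = 1 / (\<Lambda> ^ (CARD('d) - 1) * \<bar>\<beta>\<bar>)"
  define c where "c k = (case k of None \<Rightarrow> 1
    | Some i \<Rightarrow> if i = i1 then \<zeta> else if i = i2 then sgn \<beta> * \<Lambda> else \<Lambda>)" for k
  have "det (frame_matrix c) = \<zeta> * \<Lambda> ^ (CARD('d) - 1) * (sgn \<beta> * \<beta>)"
    using prod_option_scaling[OF \<open>i2 \<noteq> i1\<close>, of \<zeta> "sgn \<beta>" \<Lambda>]
    by (simp add: det_frame_matrix \<beta>_def c_def[abs_def] mult_ac)
  also have "\<dots> = 1"
    using \<beta> \<Lambda>(1) by (simp add: \<zeta>_def abs_if sgn_if)
  finally have "det (frame_matrix c) = 1" .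
  moreover have "0 < \<zeta>"
    using \<beta> \<Lambda>(1) by (simp add: \<zeta>_def)
  moreover have "scaled_frame D a x0 w \<mu> \<rho> i1 \<phi> \<zeta> \<Lambda> c"
    using \<open>0 < \<zeta>\<close> \<Lambda> \<beta> by unfold_locales (auto simp: c_def \<zeta>_def abs_mult)
  ultimately show ?thesis
    using that \<Lambda>(2) by (simp add: \<zeta>_def)
qed

lemma (in lattice_frame) uniform_G_DN_bound:
  assumes "2 \<le> CARD('d)" and "0 < \<epsilon>"
  shows "\<exists>(U :: (real^('d option)^('d option)) set) N\<^sub>\<epsilon>.
           U \<noteq> {} \<and> U \<subseteq> SLR \<and> openin (top_of_set SLR) U
           \<and> (\<forall>\<gamma>\<in>SLZ. \<forall>M\<in>U. \<gamma> ** M \<in> U)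
           \<and> (\<forall>M\<in>U. \<forall>N\<ge>N\<^sub>\<epsilon>. real (G_DN D N M) \<ge> 1 / \<epsilon>)"
proof -
  obtain \<zeta> \<Lambda> c where frame: "scaled_frame D a x0 w \<mu> \<rho> i1 \<phi> \<zeta> \<Lambda> c"
    and "\<zeta> \<le> \<epsilon> / 8" and det_1: "det (frame_matrix c) = 1"
    using scaled_frame_exists[OF assms(1), of "\<epsilon> / 8"] assms(2) by auto
  interpret scaled_frame D a x0 w \<mu> \<rho> i1 \<phi> \<zeta> \<Lambda> c
    by (rule frame)
  define U where "U = SLZ_saturation {M. \<forall>k. norm (M $ k - M0 $ k) < \<eta>}"
  have "M0 \<in> U"
    unfolding U_def using det_1 \<eta>_pos
    by (intro SLZ_saturation_superset) (auto simp: SLR_def M0_def)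
  moreover have "1 / \<epsilon> \<le> real (G_DN D N M)" if M: "M \<in> U" and N: "nat \<lceil>4 / \<zeta>\<rceil> \<le> N" for M N
  proof -
    obtain \<gamma> where \<gamma>: "\<gamma> \<in> SLZ" "\<forall>k. norm ((\<gamma> ** M) $ k - M0 $ k) < \<eta>"
      using M unfolding U_def SLZ_saturation_def by blast
    interpret near_frame D a x0 w \<mu> \<rho> i1 \<phi> \<zeta> \<Lambda> c "\<gamma> ** M"
      by unfold_locales (simp add: \<gamma>(2) less_imp_le)
    have "4 / \<zeta> \<le> real N + 1/2"
      using N by linarith
    then have "nat \<lfloor>1 / (4 * \<zeta>)\<rfloor> \<le> G_DN D N M"
      using G_DN_lower_bound G_DN_SLZ_mult[OF \<gamma>(1)] by simp
    then show ?thesis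
      using reciprocal_le_floor_quarter[OF \<zeta>_pos \<zeta>_le \<open>\<zeta> \<le> \<epsilon> / 8\<close>] by linarith
  qed
  moreover have "U \<subseteq> SLR"
    by (auto simp: U_def SLZ_saturation_def)
  moreover have "openin (top_of_set SLR) U"
    unfolding U_def by (rule openin_SLZ_saturation[OF open_rows_neighbourhood])
  moreover have "\<forall>\<gamma>\<in>SLZ. \<forall>M\<in>U. \<gamma> ** M \<in> U"
    unfolding U_def using SLZ_saturation_mult by blast
  ultimately show ?thesis
    by (intro exI[of _ U] exI[of _ "nat \<lceil>4 / \<zeta>\<rceil>"]) blast
qed

theorem proposition7p5:
  fixes D :: "(real^'d::finite) set" and a :: "real^'d"
  assumes "CARD('d) \<ge> 2"
    and "a \<in> sphere 0 1"
    and "D \<subseteq> sphere 0 1"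
    and "\<exists>V. openin (top_of_set (sphere (0::real^'d) 1)) V \<and> V \<noteq> {} \<and> V \<subseteq> D"
    and "closure D \<subseteq> open_hemisphere a"
  shows "\<exists>c>0. \<forall>\<epsilon>>0. \<exists>(U :: (real^('d option)^('d option)) set) (N\<^sub>\<epsilon> :: nat).
           U \<noteq> {} \<and> U \<subseteq> SLR \<and> openin (top_of_set SLR) U
           \<and> (\<forall>\<gamma>\<in>SLZ. \<forall>M\<in>U. \<gamma> ** M \<in> U)
           \<and> (\<forall>M\<in>U. \<forall>N\<ge>N\<^sub>\<epsilon>. real (G_DN D N M) \<ge> c / \<epsilon>)"
proof -
  obtain V x0 where V: "openin (top_of_set (sphere 0 1)) V" "x0 \<in> V" "V \<subseteq> D"
    using assms(4) by blast
  have "norm a = 1"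
    using assms(2) by simp
  obtain w \<mu> \<rho> i1 \<phi> where "lattice_frame D a x0 w \<mu> \<rho> i1 \<phi>"
    by (rule lattice_frame_exists[OF assms(1) \<open>norm a = 1\<close> assms(3) V assms(5)])
  then show ?thesis
    using lattice_frame.uniform_G_DN_bound[OF _ assms(1)] by (intro exI[of _ 1]) auto
qed

end
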